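(* Let $\mathcal{A}\subseteq\mathbb{R}^3$ be measurable with finite positive measure, $k_0,\eta,\sigma^2>0$, and for $k\in\{1,2\}$ let $\mathsf{G}_k\in L^2(\mathcal{A})$ with $\mathsf{g}_k=\int_{\mathcal{A}}|\mathsf{G}_k|^2>0$, $\mathsf{H}_k=\frac{\mathrm{j}k_0\eta}{\sqrt{4\pi}}\mathsf{G}_k$, $A_{\mathsf{u},k}>0$, $\mathsf{J}_{\mathsf{ul},k}\in\mathbb{C}$, $\overline{\gamma}_{\mathsf{ul},k}=\frac{A_{\mathsf{u},k}^2|\mathsf{J}_{\mathsf{ul},k}|^2k_0^2\eta^2}{4\pi\sigma^2}$, and $\rho=\frac{\int_{\mathcal{A}}\mathsf{G}_1^*\mathsf{G}_2}{\sqrt{\mathsf{g}_1\mathsf{g}_2}}$. Consider SIC decoding with order $1\rightarrow2$ of the uplink observation $\mathsf{Y}(\mathbf{r})=\sum_{k=1}^2\mathsf{H}_k(\mathbf{r})\mathsf{J}_{\mathsf{ul},k}A_{\mathsf{u},k}s_{\mathsf{ul},k}+\mathsf{N}_{\mathsf{ul}}(\mathbf{r})$: user 1 is decoded first by whitening the interference-plus-noise $\mathsf{H}_2\mathsf{J}_{\mathsf{ul},2}A_{\mathsf{u},2}s_{\mathsf{ul},2}+\mathsf{N}_{\mathsf{ul}}$ with the kernel $\delta(\mathbf{r}'-\mathbf{r})+\mu_2\mathsf{G}_2(\mathbf{r}')\mathsf{G}_2^*(\mathbf{r})$, $\mu_2=-\frac{1}{\mathsf{g}_2}\pm\frac{1}{\mathsf{g}_2\sqrt{1+\overline{\gamma}_{\mathsf{ul},2}\mathsf{g}_2}}$,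 followed by MRC matched to the whitened channel $\overline{\mathsf{H}}_1(\mathbf{r}')=\mathsf{H}_1(\mathbf{r}')+\mu_2\mathsf{G}_2(\mathbf{r}')\int_{\mathcal{A}}\mathsf{G}_2^*\mathsf{H}_1$, giving SNR $\gamma_{\mathsf{ul},1}=\frac{A_{\mathsf{u},1}^2|\mathsf{J}_{\mathsf{ul},1}|^2}{\sigma^2}\int_{\mathcal{A}}|\overline{\mathsf{H}}_1|^2$; then user 2 is decoded after cancelling user 1's signal, with MRC detector $\mathsf{H}_2/\sqrt{\int_{\mathcal{A}}|\mathsf{H}_2|^2}$, giving SNR $\gamma_{\mathsf{ul},2}=\frac{A_{\mathsf{u},2}^2|\mathsf{J}_{\mathsf{ul},2}|^2}{\sigma^2}\int_{\mathcal{A}}|\mathsf{H}_2|^2$. Let $\mathsf{R}_{\mathsf{ul},k}^{1\rightarrow2}=\log_2(1+\gamma_{\mathsf{ul},k})$. Then $$\mathsf{R}_{\mathsf{ul},1}^{1\rightarrow2}=\log_2\!\left(1+\overline{\gamma}_{\mathsf{ul},1}\mathsf{g}_1\left(1-\frac{\overline{\gamma}_{\mathsf{ul},2}\mathsf{g}_2|\rho|^2}{1+\overline{\gamma}_{\mathsf{ul},2}\mathsf{g}_2}\right)\right),\qquad \mathsf{R}_{\mathsf{ul},2}^{1\rightarrow2}=\log_2(1+\overline{\gamma}_{\mathsf{ul},2}\mathsf{g}_2),$$ and $$\mathsf{C}_{\mathsf{ul}}^{1\rightarrow2}=\mathsf{R}_{\mathsf{ul},1}^{1\rightarrow2}+\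mathsf{R}_{\mathsf{ul},2}^{1\rightarrow2}=\log_2\!\Big(1+\overline{\gamma}_{\mathsf{ul},1}\overline{\gamma}_{\mathsf{ul},2}\mathsf{g}_1\mathsf{g}_2(1-|\rho|^2)+\sum_{k=1}^2\overline{\gamma}_{\mathsf{ul},k}\mathsf{g}_k\Big).$$
   Context: $\delta$ is the Dirac delta; $\mathsf{N}_{\mathsf{ul}}$ is zero-mean complex Gaussian white noise with $\mathbb{E}\{\mathsf{N}_{\mathsf{ul}}(\mathbf{r})\mathsf{N}_{\mathsf{ul}}^*(\mathbf{r}')\}=\sigma^2\delta(\mathbf{r}-\mathbf{r}')$, uncorrelated with the unit-power symbols $s_{\mathsf{ul},k}$. In the paper $\mathsf{G}_k(\mathbf{r})=\frac{e^{-\mathrm{j}k_0\|\mathbf{r}-\mathbf{s}_k\|}}{\sqrt{4\pi}\|\mathbf{r}-\mathbf{s}_k\|}\sqrt{\frac{|\mathbf{e}^{\mathsf{T}}(\mathbf{s}_k-\mathbf{r})|}{\|\mathbf{r}-\mathbf{s}_k\|}}$ (line-of-sight model, user locations $\mathbf{s}_k\notin\overline{\mathcal{A}}$, aperture normal $\mathbf{e}$). *)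

theory Defs
  imports "HOL-Analysis.Analysis"
begin

type_synonym pt = "real ^ 3"

definition energy :: "pt set \<Rightarrow> (pt \<Rightarrow> complex) \<Rightarrow> real" where
  "energy A F = (LINT r:A|lebesgue. (cmod (F r))\<^sup>2)"

definition inner_A :: "pt set \<Rightarrow> (pt \<Rightarrow> complex) \<Rightarrow> (pt \<Rightarrow> complex) \<Rightarrow> complex" where
  "inner_A A F1 F2 = (LINT r:A|lebesgue. cnj (F1 r) * F2 r)"

definition L2_on :: "pt set \<Rightarrow> (pt \<Rightarrow> complex) \<Rightarrow> bool" where
  "L2_on A F \<longleftrightarrow> set_borel_measurable lebesgue A F \<and>
                  set_integrable lebesgue A (\<lambda>r. (cmod (F r))\<^sup>2)"

definition chan :: "real \<Rightarrow> real \<Rightarrow> (pt \<Rightarrow> complex) \<Rightarrow> pt \<Rightarrow> complex" where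
  "chan k0 eta G r = \<i> * complex_of_real (k0 * eta / sqrt (4 * pi)) * G r"

definition gammabar :: "real \<Rightarrow> real \<Rightarrow> real \<Rightarrow> real \<Rightarrow> complex \<Rightarrow> real" where
  "gammabar k0 eta sigma2 Au J = Au\<^sup>2 * (cmod J)\<^sup>2 * k0\<^sup>2 * eta\<^sup>2 / (4 * pi * sigma2)"

definition corr :: "pt set \<Rightarrow> (pt \<Rightarrow> complex) \<Rightarrow> (pt \<Rightarrow> complex) \<Rightarrow> complex" where
  "corr A G1 G2 = inner_A A G1 G2 / complex_of_real (sqrt (energy A G1 * energy A G2))"

definition whitened :: "pt set \<Rightarrow> real \<Rightarrow> (pt \<Rightarrow> complex) \<Rightarrow> (pt \<Rightarrow> complex) \<Rightarrow> pt \<Rightarrow> complex" where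
  "whitened A mu2 G2 H1 r = H1 r + complex_of_real mu2 * G2 r * inner_A A G2 H1"

definition rate :: "real \<Rightarrow> real" where
  "rate gamma = log 2 (1 + gamma)"

end

theory Submission
  imports Defs
begin

text \<open>Whitening turns the channel H1 of user 1 into H1 + mu2 (G2, H1) G2, whose energy is
  g1 + mu2 (2 + mu2 g2) |(G2, G1)|^2 up to the factor k0^2 eta^2 / (4 pi). Both admissible
  values of mu2 satisfy (1 + mu2 g2)^2 = 1 / (1 + gb2 g2), so the coefficient mu2 (2 + mu2 g2)
  equals -gb2 / (1 + gb2 g2), and |(G2, G1)|^2 = |rho|^2 g1 g2 gives the rate of user 1.
  User 2 sees no interference, and the sum rate is the logarithm of (1 + snr1) (1 + snr2).\<close>

lemma L2_on_set_integrable_cnj_mult: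
  assumes "L2_on A F" "L2_on A G"
  shows "set_integrable lebesgue A (\<lambda>r. cnj (F r) * G r)"
proof (rule set_integrable_bound[where f="\<lambda>r. (cmod (F r))\<^sup>2 + (cmod (G r))\<^sup>2"])
  show "set_integrable lebesgue A (\<lambda>r. (cmod (F r))\<^sup>2 + (cmod (G r))\<^sup>2)"
    using assms unfolding L2_on_def by (intro set_integral_add) auto
  have "(\<lambda>r. indicator A r *\<^sub>R (cnj (F r) * G r))
      = (\<lambda>r. cnj (indicator A r *\<^sub>R F r) * (indicator A r *\<^sub>R G r))"
    by (auto simp: indicator_def)
  moreover have "(\<lambda>r. cnj (indicator A r *\<^sub>R F r)) \<in> borel_measurable lebesgue"
    using assms(1) unfolding L2_on_def set_borel_measurable_def
    by (intro borel_measurable_continuous_on[where f=cnj]) (auto intro: continuous_intros)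
  ultimately show "set_borel_measurable lebesgue A (\<lambda>r. cnj (F r) * G r)"
    using assms(2) unfolding L2_on_def set_borel_measurable_def
    by (simp only:) (intro borel_measurable_times; simp)
  have "cmod (cnj (F r) * G r) \<le> (cmod (F r))\<^sup>2 + (cmod (G r))\<^sup>2" for r
    unfolding norm_mult complex_mod_cnj
    using sum_squares_bound[of "cmod (F r)" "cmod (G r)"]
      mult_nonneg_nonneg[OF norm_ge_zero norm_ge_zero, of "F r" "G r"]
    by linarith
  then show "AE r in lebesgue. r \<in> A \<longrightarrow>
      cmod (cnj (F r) * G r) \<le> norm ((cmod (F r))\<^sup>2 + (cmod (G r))\<^sup>2)"
    by auto
qed

lemma inner_A_commute: "inner_A A G F = cnj (inner_A A F G)"
  unfolding inner_A_def set_lebesgue_integral_def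
  by (simp add: Bochner_Integration.integral_cnj[symmetric] mult.commute)

lemma energy_conv_inner_A: "complex_of_real (energy A F) = inner_A A F F"
proof -
  have "(\<lambda>r. complex_of_real ((cmod (F r))\<^sup>2)) = (\<lambda>r. cnj (F r) * F r)"
    by (simp add: complex_norm_square mult.commute del: of_real_power)
  then show ?thesis
    unfolding energy_def inner_A_def set_integral_complex_of_real[symmetric] by simp
qed

lemma energy_nonneg: "energy A F \<ge> 0"
  unfolding energy_def set_lebesgue_integral_def by (intro integral_nonneg_AE) auto

lemma energy_cmult: "energy A (\<lambda>r. z * F r) = (cmod z)\<^sup>2 * energy A F"
  unfolding energy_def by (simp add: norm_mult power_mult_distrib)

lemma energy_add_cmult:
  assumes "L2_on A F" "L2_on A G"
  shows "energy A (\<lambda>r. F r + b * G r)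
       = energy A F + 2 * Re (b * inner_A A F G) + (cmod b)\<^sup>2 * energy A G"
proof -
  have expand: "cnj (F r + b * G r) * (F r + b * G r)
      = cnj (F r) * F r + b * (cnj (F r) * G r) + cnj b * (cnj (G r) * F r)
        + b * cnj b * (cnj (G r) * G r)" for r
    by (simp add: algebra_simps)
  have integrable: "set_integrable lebesgue A (\<lambda>r. cnj (P r) * Q r)"
    if "P \<in> {F, G}" "Q \<in> {F, G}" for P Q
    using that assms L2_on_set_integrable_cnj_mult by auto
  have "complex_of_real (energy A (\<lambda>r. F r + b * G r))
      = inner_A A F F + (b * inner_A A F G + cnj (b * inner_A A F G)) + b * cnj b * inner_A A G G"
    unfolding energy_conv_inner_A inner_A_def expand
    using integrable inner_A_commute[of A G F, unfolded inner_A_def]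
    by (simp add: set_integral_add set_integral_mult_right)
  also have "\<dots> = complex_of_real (energy A F) + complex_of_real (2 * Re (b * inner_A A F G))
      + complex_of_real ((cmod b)\<^sup>2) * complex_of_real (energy A G)"
    by (simp only: complex_add_cnj complex_norm_square energy_conv_inner_A)
  also have "\<dots> = complex_of_real
      (energy A F + 2 * Re (b * inner_A A F G) + (cmod b)\<^sup>2 * energy A G)"
    by simp
  finally show ?thesis
    using of_real_eq_iff by blast
qed

lemma energy_whitened:
  assumes "L2_on A F" "L2_on A G"
  shows "energy A (whitened A mu G F)
       = energy A F + mu * (2 + mu * energy A G) * (cmod (inner_A A G F))\<^sup>2"
proof -
  define a where "a = inner_A A G F"
  have whitened_eq: "whitened A mu G F = (\<lambda>r. F r + (complex_of_real mu * a) * G r)"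
    unfolding whitened_def a_def by (simp add: algebra_simps)
  have Re_eq: "Re (complex_of_real mu * a * inner_A A F G) = mu * (cmod a)\<^sup>2"
  proof -
    have "complex_of_real mu * a * inner_A A F G = complex_of_real (mu * (cmod a)\<^sup>2)"
      unfolding a_def inner_A_commute[of A F G]
      by (simp only: mult.assoc complex_norm_square of_real_mult)
    then show ?thesis
      by (metis Re_complex_of_real)
  qed
  have "energy A (whitened A mu G F) = energy A F
      + 2 * Re (complex_of_real mu * a * inner_A A F G) + (cmod (complex_of_real mu * a))\<^sup>2 * energy A G"
    unfolding whitened_eq by (rule energy_add_cmult[OF assms])
  also have "\<dots> = energy A F + mu * (2 + mu * energy A G) * (cmod a)\<^sup>2"
    unfolding Re_eq by (simp add: norm_mult power_mult_distrib algebra_simps power2_eq_square)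
  finally show ?thesis
    unfolding a_def .
qed

lemma whitened_cmult:
  "whitened A mu G (\<lambda>r. z * F r) = (\<lambda>r. z * whitened A mu G F r)"
  unfolding whitened_def inner_A_def by (simp add: algebra_simps)

lemma chan_eq_cmult:
  "chan k0 eta F = (\<lambda>r. (\<i> * complex_of_real (k0 * eta / sqrt (4 * pi))) * F r)"
  unfolding chan_def by (simp add: mult.assoc)

lemma cmod_chan_factor_squared:
  "(cmod (\<i> * complex_of_real (k0 * eta / sqrt (4 * pi))))\<^sup>2 = k0\<^sup>2 * eta\<^sup>2 / (4 * pi)"
  by (simp add: norm_mult norm_divide power_divide power_mult_distrib
      del: of_real_mult of_real_divide)

lemma snr_chan_eq_gammabar:
  "Au\<^sup>2 * (cmod J)\<^sup>2 / sigma2 * (k0\<^sup>2 * eta\<^sup>2 / (4 * pi) * E) = gammabar k0 eta sigma2 Au J * E"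
  unfolding gammabar_def by (simp add: field_simps)

lemma gammabar_nonneg: "sigma2 > 0 \<Longrightarrow> gammabar k0 eta sigma2 Au J \<ge> 0"
  unfolding gammabar_def by simp

lemma whitening_coefficient:
  fixes g gb mu :: real
  assumes "g > 0" "gb \<ge> 0"
    and "mu = - 1 / g + 1 / (g * sqrt (1 + gb * g)) \<or> mu = - 1 / g - 1 / (g * sqrt (1 + gb * g))"
  shows "mu * (2 + mu * g) = - gb / (1 + gb * g)"
proof -
  have pos: "1 + gb * g > 0"
    using assms(1,2) by (simp add: add_pos_nonneg)
  have "mu * g + 1 = 1 / sqrt (1 + gb * g) \<or> mu * g + 1 = - 1 / sqrt (1 + gb * g)"
    using assms(1,3) by (auto simp: field_simps)
  then have "(mu * g + 1)\<^sup>2 = 1 / (1 + gb * g)"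
    using pos by (auto simp: power_divide)
  then have "mu * (2 + mu * g) = (1 / (1 + gb * g) - 1) / g"
    using assms(1) by (simp add: field_simps power2_eq_square)
  also have "1 / (1 + gb * g) - 1 = - gb * g / (1 + gb * g)"
    using pos by (simp add: field_simps)
  finally show ?thesis
    using assms(1) by simp
qed

lemma cmod_corr_squared:
  assumes "energy A G1 > 0" "energy A G2 > 0"
  shows "(cmod (corr A G1 G2))\<^sup>2 = (cmod (inner_A A G2 G1))\<^sup>2 / (energy A G1 * energy A G2)"
  using assms
  by (simp add: corr_def inner_A_commute[of A G2] norm_divide power_divide)

lemma rate_add:
  assumes "x \<ge> 0" "y \<ge> 0"
  shows "rate x + rate y = log 2 ((1 + x) * (1 + y))"
  unfolding rate_def using assms by (simp add: log_mult_pos add_pos_nonneg)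

theorem corollary1:
  fixes A :: "pt set" and k0 eta sigma2 mu2 :: real
    and G :: "nat \<Rightarrow> pt \<Rightarrow> complex" and Au :: "nat \<Rightarrow> real" and J :: "nat \<Rightarrow> complex"
  assumes A_meas: "A \<in> sets lebesgue"
    and A_fin: "emeasure lebesgue A < \<infinity>" and A_pos: "emeasure lebesgue A > 0"
    and k0: "k0 > 0" and eta: "eta > 0" and sigma2: "sigma2 > 0"
    and G_L2: "\<And>k. k \<in> {1,2} \<Longrightarrow> L2_on A (G k)"
    and g_pos: "\<And>k. k \<in> {1,2} \<Longrightarrow> energy A (G k) > 0"
    and Au_pos: "\<And>k. k \<in> {1,2} \<Longrightarrow> Au k > 0"
    and mu2: "mu2 = - 1 / energy A (G 2)
                    + 1 / (energy A (G 2) * sqrt (1 + gammabar k0 eta sigma2 (Au 2) (J 2) * energy A (G 2)))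
           \<or> mu2 = - 1 / energy A (G 2)
                    - 1 / (energy A (G 2) * sqrt (1 + gammabar k0 eta sigma2 (Au 2) (J 2) * energy A (G 2)))"
  defines "gb \<equiv> \<lambda>k. gammabar k0 eta sigma2 (Au k) (J k)"
    and "g \<equiv> \<lambda>k. energy A (G k)"
    and "rho \<equiv> corr A (G 1) (G 2)"
    and "snr1 \<equiv> (Au 1)\<^sup>2 * (cmod (J 1))\<^sup>2 / sigma2 * energy A (whitened A mu2 (G 2) (chan k0 eta (G 1)))"
    and "snr2 \<equiv> (Au 2)\<^sup>2 * (cmod (J 2))\<^sup>2 / sigma2 * energy A (chan k0 eta (G 2))"
  shows "rate snr1 = log 2 (1 + gb 1 * g 1 * (1 - gb 2 * g 2 * (cmod rho)\<^sup>2 / (1 + gb 2 * g 2)))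
       \<and> rate snr2 = log 2 (1 + gb 2 * g 2)
       \<and> rate snr1 + rate snr2
           = log 2 (1 + gb 1 * gb 2 * g 1 * g 2 * (1 - (cmod rho)\<^sup>2) + (\<Sum>k\<in>{1,2}. gb k * g k))"
proof -
  have L2_1: "L2_on A (G 1)" and L2_2: "L2_on A (G 2)"
    using G_L2 by auto
  have g1: "g 1 > 0" and g2: "g 2 > 0"
    using g_pos unfolding g_def by auto
  have gb_nonneg: "gb k \<ge> 0" for k
    unfolding gb_def using gammabar_nonneg[OF sigma2] .
  have denom_pos: "1 + gb 2 * g 2 > 0"
    using gb_nonneg[of 2] g2 by (simp add: add_pos_nonneg)
  have inner: "(cmod (inner_A A (G 2) (G 1)))\<^sup>2 = (cmod rho)\<^sup>2 * g 1 * g 2"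
    using cmod_corr_squared[of A "G 1" "G 2"] g1 g2 unfolding rho_def g_def by simp
  have coeff: "mu2 * (2 + mu2 * g 2) = - gb 2 / (1 + gb 2 * g 2)"
    using whitening_coefficient[OF g2 gb_nonneg] mu2 unfolding g_def gb_def by blast
  have "snr1 = gb 1 * energy A (whitened A mu2 (G 2) (G 1))"
    unfolding snr1_def chan_eq_cmult whitened_cmult energy_cmult cmod_chan_factor_squared
      snr_chan_eq_gammabar gb_def ..
  also have "\<dots> = gb 1 * (g 1 - gb 2 / (1 + gb 2 * g 2) * (cmod rho)\<^sup>2 * g 1 * g 2)"
    using coeff inner unfolding energy_whitened[OF L2_1 L2_2] g_def by simp
  finally have snr1: "snr1 = gb 1 * g 1 * (1 - gb 2 * g 2 * (cmod rho)\<^sup>2 / (1 + gb 2 * g 2))"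
    by (simp add: field_simps)
  have snr2: "snr2 = gb 2 * g 2"
    unfolding snr2_def chan_eq_cmult energy_cmult cmod_chan_factor_squared snr_chan_eq_gammabar
      gb_def g_def ..
  have "snr1 \<ge> 0"
    unfolding snr1_def using sigma2 energy_nonneg by simp
  then have "rate snr1 + rate snr2 = log 2 ((1 + snr1) * (1 + snr2))"
    using rate_add gb_nonneg g2 unfolding snr2 by simp
  also have "(1 + snr1) * (1 + snr2)
      = 1 + gb 1 * gb 2 * g 1 * g 2 * (1 - (cmod rho)\<^sup>2) + (\<Sum>k\<in>{1,2}. gb k * g k)"
    unfolding snr1 snr2 using denom_pos by (simp add: field_simps)
  finally show ?thesis
    unfolding rate_def snr1 snr2 by simp
qed

end
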